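(* In the situation of Theorem 2 (a fully regular system $A(y)=b$ with $A=A_\ell\sigma^\ell+\dots+A_0$, $A_i\in\mathbb{F}[t]^{n\times n}$, $b\in\mathbb{F}[t]^n$, $\det A_\ell\ne0$; a $P\in\mathrm{GL}_n(\mathbb{F}(t)[\sigma,\sigma^{-1}])$ with $PA=\sum_{i=0}^{\tilde\ell}\tilde A_i\sigma^i$, $\tilde A_i\in\mathbb{F}[t]^{n\times n}$, $P(b)\in\mathbb{F}[t]^n$, $\det\tilde A_0\ne0$; $m$ the common denominator of $A_\ell^{-1}$, $p$ the common denominator of $\tilde A_0^{-1}$; $D=\mathrm{disp}(\sigma^{-\ell}(\operatorname{ap}(m)),\operatorname{ap}(p))$; and a solution $y=d^{-1}z$ in reduced representation), one has $$\operatorname{ap}(d)\;\Big|\;\gcd\Big(\prod_{j=0}^{D}\sigma^{-\ell-j}(m),\ \prod_{j=0}^{D}\sigma^{j}(p)\Big).$$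
   Context: All fields contain $\mathbb{Q}$. $(\mathbb{F}(t),\sigma)$ is a $\Pi\Sigma$-extension of the difference field $(\mathbb{F},\sigma)$: $\sigma$ is an automorphism of the rational function field $\mathbb{F}(t)$ restricting to an automorphism of $\mathbb{F}$, with $\sigma(t)=t+\beta$ ($\beta\in\mathbb{F}\setminus\{0\}$, $\Sigma$-monomial) or $\sigma(t)=\alpha t$ ($\alpha\in\mathbb{F}\setminus\{0\}$, $\Pi$-monomial), and the fixed field of $\sigma$ on $\mathbb{F}(t)$ equals that on $\mathbb{F}$. For $a,b\in\mathbb{F}[t]\setminus\{0\}$: $\mathrm{spread}(a,b)=\{k\ge0:\gcd(a,\sigma^k(b))\notin\mathbb{F}\}$, $\mathrm{disp}(a,b)=\max\mathrm{spread}(a,b)$ ($\max\emptyset=-\infty$, max of infinite set $=\infty$); empty products equal $1$. $\mathrm{per}(a)=1$ for a $\Sigma$-monomial, $t^\mu$ with $\mu$ maximal such that $t^\mu\mid a$ for a $\Pi$-monomial; $\operatorname{ap}(a)=a/\mathrm{per}(a)$. Reduced representation: $d\in\mathbb{F}[t]\setminus\{0\}$, $z\in\mathbb{F}[t]^n$, $\gcd(z_1,\dots,z_n,d)=1$. $\mathbb{F}(t)[\sigma]$ is the Ore polynomial ring with $\sigma a=\sigma(a)\sigma$, $\mathbb{F}(t)[\sigma,\sigma^{-1}]$ its localisation at powers of $\sigma$; operators act on $\mathbb{F}(t)$ by $(\sum a_i\sigma^i)(\alpha)=\sum a_i\sigma^i(\alpha)$, operator matrices act on vectors as matrix–vector products;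 unimodular means invertible over the same ring. A square system $A(y)=b$ with $A=\sum_{i=0}^\ell A_i\sigma^i$ is fully regular if $\det A_\ell\ne0$ and there is a unimodular $P$ over $\mathbb{F}(t)[\sigma,\sigma^{-1}]$ with $PA\in\mathbb{F}(t)[\sigma]^{n\times n}$ having trailing coefficient matrix of nonzero determinant. *)

theory Defs
  imports "HOL-Analysis.Determinants" "HOL-Computational_Algebra.Computational_Algebra"
    "HOL-Computational_Algebra.Normalized_Fraction" "HOL-Library.Extended_Real"
begin

text \<open>The ground field F is a type 'a of class field_char_0; F[t] is 'a poly and
  F(t) is 'a poly fract.  The automorphism sigma of F(t) is determined by an
  automorphism s of F (acting on coefficients) and by the image tt of t, which is
  [:beta,1:] (Sigma-monomial) or [:0,alpha:] (Pi-monomial).\<close>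

definition field_aut :: "('a::field \<Rightarrow> 'a) \<Rightarrow> bool" where
  "field_aut s \<longleftrightarrow> bij s \<and> (\<forall>x y. s (x + y) = s x + s y) \<and> (\<forall>x y. s (x * y) = s x * s y) \<and> s 1 = 1"

definition sig_poly :: "('a::field \<Rightarrow> 'a) \<Rightarrow> 'a poly \<Rightarrow> 'a poly \<Rightarrow> 'a poly" where
  "sig_poly s tt q = pcompose (map_poly s q) tt"

definition sig_fract :: "('a::{field_char_0,field_gcd} \<Rightarrow> 'a) \<Rightarrow> 'a poly \<Rightarrow> 'a poly fract \<Rightarrow> 'a poly fract" where
  "sig_fract s tt x = (let q = quot_of_fract x in
      Fract (sig_poly s tt (fst q)) (sig_poly s tt (snd q)))"

definition ipow :: "('b \<Rightarrow> 'b) \<Rightarrow> int \<Rightarrow> 'b \<Rightarrow> 'b" where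
  "ipow f k = (if 0 \<le> k then f ^^ nat k else (inv f) ^^ nat (- k))"

definition PiSigma_ext :: "('a::{field_char_0,field_gcd} \<Rightarrow> 'a) \<Rightarrow> 'a poly \<Rightarrow> bool \<Rightarrow> bool" where
  "PiSigma_ext s tt isSigma \<longleftrightarrow> field_aut s \<and>
     (if isSigma then (\<exists>beta. beta \<noteq> 0 \<and> tt = [:beta, 1:])
                 else (\<exists>alpha. alpha \<noteq> 0 \<and> tt = [:0, alpha:])) \<and>
     {f. sig_fract s tt f = f} = (\<lambda>c. to_fract [:c:]) ` {c. s c = c}"

definition spread :: "('a::{field_char_0,field_gcd} \<Rightarrow> 'a) \<Rightarrow> 'a poly \<Rightarrow> 'a poly \<Rightarrow> 'a poly \<Rightarrow> nat set" where
  "spread s tt a b = {k. degree (gcd a ((sig_poly s tt ^^ k) b)) \<noteq> 0}"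

definition disp :: "('a::{field_char_0,field_gcd} \<Rightarrow> 'a) \<Rightarrow> 'a poly \<Rightarrow> 'a poly \<Rightarrow> 'a poly \<Rightarrow> ereal" where
  "disp s tt a b = (let S = spread s tt a b in
      if S = {} then - \<infinity> else if finite S then ereal (real (Max S)) else \<infinity>)"

definition per :: "bool \<Rightarrow> 'a::field poly \<Rightarrow> 'a poly" where
  "per isSigma a = (if isSigma then 1 else monom 1 (order 0 a))"

definition ap :: "bool \<Rightarrow> 'a::field poly \<Rightarrow> 'a poly" where
  "ap isSigma a = a div per isSigma a"

definition common_denom :: "'a::{field_char_0,field_gcd} poly \<Rightarrow> ('a poly fract)^'n^'m \<Rightarrow> bool" where
  "common_denom m M \<longleftrightarrow> m \<noteq> 0 \<and> (\<forall>i j. to_fract m * M$i$j \<in> range to_fract) \<and>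
     (\<forall>m'. m' \<noteq> 0 \<and> (\<forall>i j. to_fract m' * M$i$j \<in> range to_fract) \<longrightarrow> m dvd m')"

definition fvec :: "('a::idom)^'n \<Rightarrow> ('a fract)^'n" where
  "fvec v = (\<chi> i. to_fract (v$i))"
definition fmat :: "('a::idom)^'n^'m \<Rightarrow> ('a fract)^'n^'m" where
  "fmat M = (\<chi> i j. to_fract (M$i$j))"

text \<open>An n x n matrix over F(t)[sigma,sigma^-1] is represented as a finitely supported
  Laurent polynomial in sigma with coefficients in F(t)^(n x n):  P = sum_k P k sigma^k.\<close>
type_synonym ('a,'n) opmat = "int \<Rightarrow> ('a poly fract)^'n^'n"

definition finsupp :: "(int \<Rightarrow> 'b::zero) \<Rightarrow> bool" where
  "finsupp P \<longleftrightarrow> finite {k. P k \<noteq> 0}"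

definition sig_mat :: "('a::{field_char_0,field_gcd} \<Rightarrow> 'a) \<Rightarrow> 'a poly \<Rightarrow> int \<Rightarrow> ('a poly fract)^'n^'m \<Rightarrow> ('a poly fract)^'n^'m" where
  "sig_mat s tt k M = (\<chi> i j. ipow (sig_fract s tt) k (M$i$j))"

definition sig_vec :: "('a::{field_char_0,field_gcd} \<Rightarrow> 'a) \<Rightarrow> 'a poly \<Rightarrow> int \<Rightarrow> ('a poly fract)^'n \<Rightarrow> ('a poly fract)^'n" where
  "sig_vec s tt k v = (\<chi> i. ipow (sig_fract s tt) k (v$i))"

text \<open>Product in the Ore ring: (a sigma^i)(b sigma^j) = a sigma^i(b) sigma^(i+j)\<close>
definition op_mult :: "('a::{field_char_0,field_gcd} \<Rightarrow> 'a) \<Rightarrow> 'a poly \<Rightarrow> ('a,'n::finite) opmat \<Rightarrow> ('a,'n) opmat \<Rightarrow> ('a,'n) opmat" where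
  "op_mult s tt P Q = (\<lambda>k. \<Sum>i\<in>{i. P i \<noteq> 0}. P i ** sig_mat s tt i (Q (k - i)))"

definition op_one :: "('a::{field_char_0,field_gcd},'n::finite) opmat" where
  "op_one = (\<lambda>k. if k = 0 then mat 1 else 0)"

definition op_apply :: "('a::{field_char_0,field_gcd} \<Rightarrow> 'a) \<Rightarrow> 'a poly \<Rightarrow> ('a,'n::finite) opmat \<Rightarrow> ('a poly fract)^'n \<Rightarrow> ('a poly fract)^'n" where
  "op_apply s tt P y = (\<Sum>i\<in>{i. P i \<noteq> 0}. P i *v sig_vec s tt i y)"

definition unimodular :: "('a::{field_char_0,field_gcd} \<Rightarrow> 'a) \<Rightarrow> 'a poly \<Rightarrow> ('a,'n::finite) opmat \<Rightarrow> bool" where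
  "unimodular s tt P \<longleftrightarrow> finsupp P \<and>
     (\<exists>Q. finsupp Q \<and> op_mult s tt P Q = op_one \<and> op_mult s tt Q P = op_one)"

definition poly_op :: "nat \<Rightarrow> (nat \<Rightarrow> ('a::{field_char_0,field_gcd} poly)^'n^'n) \<Rightarrow> ('a,'n::finite) opmat" where
  "poly_op l A = (\<lambda>k. if 0 \<le> k \<and> k \<le> int l then fmat (A (nat k)) else 0)"

end

theory Submission
  imports Defs
begin

text \<open>Let q be a prime factor of ap(d) and e(k) the multiplicity of sigma^k(q) in d.
  Solving the system for sigma^l(y) with the inverse of the leading matrix shows that
  sigma^l(d) divides m times the lcm of the sigma^k(d), 0 <= k < l; solving the transformed
  system for y with the inverse of its trailing matrix shows that d divides p times the lcm
  of the sigma^k(d), 1 <= k <= l'.  So every copy of sigma^k(q) in d is accounted for by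
  sigma^(-l)(m) or by a copy of sigma^(k+i)(q) in d, i > 0, and likewise by p or a copy of
  sigma^(k-i)(q).  By Karr's aperiodicity lemma (q is not a factor of t) only finitely many
  sigma^k(q) divide d, so both chains terminate: at some sigma^K(q) dividing sigma^(-l)(ap m)
  and at some sigma^B(q) dividing ap p.  Then K - B lies in the spread, so K, -B <= D, and
  summing along the chains bounds the multiplicity of q in ap(d) by its multiplicity in
  either product.\<close>

locale comm_ring_hom =
  fixes f :: "'a::comm_ring_1 \<Rightarrow> 'b::comm_ring_1"
  assumes hom_add: "f (x + y) = f x + f y"
    and hom_mult: "f (x * y) = f x * f y"
    and hom_one: "f 1 = 1"
begin

lemma hom_zero: "f 0 = 0"
  using hom_add[of 0 0] by simp

lemma hom_uminus: "f (- x) = - f x"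
  using hom_add[of x "- x"] minus_unique[of "f x" "f (- x)"] by (simp add: hom_zero)

lemma hom_diff: "f (x - y) = f x - f y"
  using hom_add[of x "- y"] by (simp add: hom_uminus)

lemma hom_sum: "f (sum g A) = (\<Sum>x\<in>A. f (g x))"
  by (induction A rule: infinite_finite_induct) (auto simp: hom_zero hom_add)

lemma hom_prod: "f (prod g A) = (\<Prod>x\<in>A. f (g x))"
  by (induction A rule: infinite_finite_induct) (auto simp: hom_one hom_mult)

lemma hom_power: "f (x ^ n) = f x ^ n"
  by (induction n) (auto simp: hom_one hom_mult)

lemma hom_dvd: "a dvd b \<Longrightarrow> f a dvd f b"
  by (metis dvd_def hom_mult)

end

lemma comm_ring_hom_comp: "comm_ring_hom f \<Longrightarrow> comm_ring_hom g \<Longrightarrow> comm_ring_hom (f \<circ> g)"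
  by (simp add: comm_ring_hom_def)

lemma comm_ring_hom_divide:
  fixes f :: "'a::field \<Rightarrow> 'b::field"
  assumes "comm_ring_hom f"
  shows "f (x / y) = f x / f y"
proof -
  interpret comm_ring_hom f by fact
  have "f (inverse y) = inverse (f y)"
  proof (cases "y = 0")
    case False
    then have "f y * f (inverse y) = 1" by (simp flip: hom_mult hom_one)
    then show ?thesis by (metis inverse_unique)
  qed (simp add: hom_zero)
  then show ?thesis by (simp add: divide_inverse hom_mult)
qed

locale ring_aut = comm_ring_hom f for f :: "'a::comm_ring_1 \<Rightarrow> 'a" +
  assumes bij: "bij f"
begin

lemma inv_apply [simp]: "inv f (f x) = x"
  using bij by (simp add: bij_is_inj)

lemma apply_inv [simp]: "f (inv f x) = x"
  using bij by (simp add: bij_is_surj surj_f_inv_f)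

lemma eq_0_iff [simp]: "f a = 0 \<longleftrightarrow> a = 0"
  by (metis hom_zero inv_apply)

lemma dvd_iff [simp]: "f a dvd f b \<longleftrightarrow> a dvd b"
proof
  assume "f a dvd f b"
  then obtain c where "f b = f a * f (inv f c)" by (auto elim!: dvdE)
  then have "f b = f (a * inv f c)" by (simp add: hom_mult)
  then show "a dvd b" by (metis inv_apply dvd_triv_left)
qed (rule hom_dvd)

lemma dvd_1_iff [simp]: "f a dvd 1 \<longleftrightarrow> a dvd 1"
  using dvd_iff[of a 1] by (simp add: hom_one)

lemma ring_aut_inv: "ring_aut (inv f)"
proof unfold_locales
  show "inv f (x + y) = inv f x + inv f y" for x y
    by (metis apply_inv inv_apply hom_add)
  show "inv f (x * y) = inv f x * inv f y" for x y
    by (metis apply_inv inv_apply hom_mult)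
  show "inv f 1 = 1"
    by (metis inv_apply hom_one)
  show "bij (inv f)"
    by (rule bij_imp_bij_inv[OF bij])
qed

end

lemma ring_aut_id: "ring_aut id"
  by unfold_locales simp_all

lemma ring_aut_comp: "ring_aut f \<Longrightarrow> ring_aut g \<Longrightarrow> ring_aut (f \<circ> g)"
  by (simp add: ring_aut_def ring_aut_axioms_def comm_ring_hom_comp bij_comp)

lemma ring_aut_funpow: "ring_aut f \<Longrightarrow> ring_aut (f ^^ n)"
  by (induction n) (simp_all add: ring_aut_id ring_aut_comp)

lemma ring_aut_ipow: "ring_aut f \<Longrightarrow> ring_aut (ipow f k)"
  by (simp add: ipow_def ring_aut_funpow ring_aut.ring_aut_inv)

lemma ring_aut_prime_elem:
  fixes f :: "'a::factorial_ring_gcd \<Rightarrow> 'a"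
  assumes "ring_aut f" and "prime_elem a"
  shows "prime_elem (f a)"
proof -
  interpret ring_aut f by fact
  have "f a dvd x \<or> f a dvd y" if "f a dvd x * y" for x y
  proof -
    have "f a dvd f (inv f x * inv f y)"
      using that by (simp add: hom_mult)
    then have "a dvd inv f x * inv f y"
      by simp
    then show ?thesis
      using \<open>prime_elem a\<close> by (metis prime_elem_dvd_mult_iff dvd_iff apply_inv)
  qed
  with \<open>prime_elem a\<close> show ?thesis by (simp add: prime_elem_def)
qed

lemma ring_aut_multiplicity:
  fixes f :: "'a::factorial_ring_gcd \<Rightarrow> 'a"
  assumes "ring_aut f"
  shows "multiplicity (f p) (f x) = multiplicity p x"
proof -
  interpret ring_aut f by fact
  show ?thesis by (simp add: multiplicity_def flip: hom_power)
qed

lemma ipow_int: "ipow f (int n) = f ^^ n"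
  by (simp add: ipow_def)

lemma ipow_0 [simp]: "ipow f 0 x = x"
  by (simp add: ipow_def)

lemma ipow_succ:
  assumes "bij f"
  shows "ipow f (k + 1) x = f (ipow f k x)"
proof -
  consider "0 \<le> k" | "k = - 1" | "k < - 1" by linarith
  then show ?thesis
  proof cases
    case 1
    then have "nat (k + 1) = Suc (nat k)" by simp
    with 1 show ?thesis by (simp add: ipow_def)
  next
    case 2
    with assms show ?thesis by (simp add: ipow_def bij_is_surj surj_f_inv_f)
  next
    case 3
    then have "nat (- k) = Suc (nat (- (k + 1)))" by simp
    with 3 assms show ?thesis
      by (simp add: ipow_def bij_is_surj surj_f_inv_f)
  qed
qed

lemma ipow_add:
  assumes "bij f"
  shows "ipow f a (ipow f b x) = ipow f (a + b) x"
proof (induction a rule: int_induct[where k = 0])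
  case (step1 i)
  then have "ipow f (i + 1) (ipow f b x) = f (ipow f (i + b) x)"
    by (simp add: ipow_succ[OF assms])
  also have "\<dots> = ipow f (i + 1 + b) x"
    using ipow_succ[OF assms, of "i + b"] by (simp add: algebra_simps)
  finally show ?case .
next
  case (step2 i)
  have "f (ipow f (i - 1) (ipow f b x)) = f (ipow f (i - 1 + b) x)"
    using step2 ipow_succ[OF assms, of "i - 1"] ipow_succ[OF assms, of "i - 1 + b"]
    by (simp add: algebra_simps)
  then show ?case
    using assms by (simp add: bij_is_inj inj_eq)
qed simp

lemma ipow_commute:
  assumes "bij f" and "bij g" and "\<And>x. h (f x) = g (h x)"
  shows "h (ipow f k x) = ipow g k (h x)"
proof (induction k rule: int_induct[where k = 0])
  case (step1 i)
  then show ?case by (simp add: ipow_succ assms)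
next
  case (step2 i)
  then have "g (h (ipow f (i - 1) x)) = g (ipow g (i - 1) (h x))"
    using ipow_succ[OF assms(1), of "i - 1"] ipow_succ[OF assms(2), of "i - 1"] assms(3) by simp
  then show ?case
    using assms(2) by (simp add: bij_is_inj inj_eq)
qed simp

lemma ipow_invariant:
  assumes "bij f" and "\<And>x. g (f x) = g x"
  shows "g (ipow f k x) = g x"
proof -
  have inv: "g (inv f x) = g x" for x
    by (metis assms bij_is_surj surj_f_inv_f)
  have "g ((f ^^ n) x) = g x" "g ((inv f ^^ n) x) = g x" for n x
    by (induction n) (simp_all add: assms(2) inv)
  then show ?thesis by (simp add: ipow_def)
qed

lemma comm_ring_hom_map_poly:
  assumes "comm_ring_hom f"
  shows "comm_ring_hom (map_poly f)"
proof -
  interpret comm_ring_hom f by fact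
  show ?thesis
    by unfold_locales
      (auto intro!: poly_eqI simp: coeff_map_poly hom_zero hom_add hom_mult hom_sum hom_one coeff_mult)
qed

lemma comm_ring_hom_pcompose: "comm_ring_hom (\<lambda>p. pcompose p q)"
  by unfold_locales (simp_all add: pcompose_add pcompose_mult pcompose_1)

lemma bij_map_poly:
  assumes "bij f" and "f 0 = 0"
  shows "bij (map_poly f)"
proof -
  have "inv f 0 = 0"
    by (metis assms bij_is_inj inv_f_f)
  with assms show ?thesis
    by (intro o_bij[of "map_poly (inv f)"])
      (simp_all add: fun_eq_iff map_poly_map_poly o_def bij_is_inj bij_is_surj surj_f_inv_f)
qed

lemma bij_pcompose_linear:
  fixes q :: "'a::field poly"
  assumes "degree q = 1"
  shows "bij (\<lambda>p. pcompose p q)"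
proof -
  define a b where "a = coeff q 0" and "b = coeff q 1"
  have q: "q = [:a, b:]"
  proof (rule poly_eqI)
    show "coeff q n = coeff [:a, b:] n" for n
      using coeff_eq_0[of q n] assms by (cases n; cases "n - 1") (auto simp: a_def b_def)
  qed
  with assms have "b \<noteq> 0" by auto
  define q' where "q' = [:- a / b, 1 / b:]"
  have "pcompose q' q = [:0, 1:]" "pcompose q q' = [:0, 1:]"
    using \<open>b \<noteq> 0\<close> by (simp_all add: q q'_def pcompose_pCons algebra_simps)
  then show ?thesis
    by (intro o_bij[of "\<lambda>p. pcompose p q'"]) (simp_all add: fun_eq_iff flip: pcompose_assoc)
qed

locale poly_difference_field =
  fixes s :: "'a::{field_char_0,field_gcd} \<Rightarrow> 'a" and tt :: "'a poly"
  assumes field_aut: "field_aut s" and degree_tt: "degree tt = 1"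
begin

abbreviation shift :: "int \<Rightarrow> 'a poly \<Rightarrow> 'a poly" where
  "shift k \<equiv> ipow (sig_poly s tt) k"

lemma ring_aut_s: "ring_aut s"
  using field_aut by unfold_locales (simp_all add: field_aut_def)

lemma s_0 [simp]: "s 0 = 0"
  using ring_aut_s by (simp add: ring_aut_def comm_ring_hom.hom_zero)

lemma s_eq_0_iff [simp]: "s x = 0 \<longleftrightarrow> x = 0"
  by (rule ring_aut.eq_0_iff[OF ring_aut_s])

lemma ring_aut_sig_poly: "ring_aut (sig_poly s tt)"
proof -
  have "sig_poly s tt = (\<lambda>p. pcompose p tt) \<circ> map_poly s"
    by (simp add: fun_eq_iff sig_poly_def)
  moreover have "ring_aut (map_poly s)"
    using ring_aut_s comm_ring_hom_map_poly[of s] bij_map_poly[of s]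
    by (simp add: ring_aut_def ring_aut_axioms_def)
  moreover have "ring_aut (\<lambda>p. pcompose p tt)"
    using comm_ring_hom_pcompose bij_pcompose_linear[OF degree_tt]
    by (simp add: ring_aut_def ring_aut_axioms_def)
  ultimately show ?thesis by (simp add: ring_aut_comp)
qed

lemma degree_sig_poly [simp]: "degree (sig_poly s tt p) = degree p"
  by (simp add: sig_poly_def degree_pcompose degree_map_poly degree_tt)

lemma sig_poly_const [simp]: "sig_poly s tt [:c:] = [:s c:]"
  by (simp add: sig_poly_def map_poly_pCons)

lemma sig_poly_smult: "sig_poly s tt (smult c p) = smult (s c) (sig_poly s tt p)"
  using comm_ring_hom.hom_mult[of "sig_poly s tt" "[:c:]" p] ring_aut_sig_poly
  by (simp add: ring_aut_def)

lemma bij_sig_poly: "bij (sig_poly s tt)"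
  using ring_aut_sig_poly by (simp add: ring_aut_def ring_aut_axioms_def)

lemma ring_aut_shift: "ring_aut (shift k)"
  by (rule ring_aut_ipow[OF ring_aut_sig_poly])

lemma degree_shift [simp]: "degree (shift k p) = degree p"
  by (rule ipow_invariant[OF bij_sig_poly, of degree]) simp

lemma shift_shift [simp]: "shift a (shift b x) = shift (a + b) x"
  by (rule ipow_add[OF bij_sig_poly])

lemma shift_eq_0_iff [simp]: "shift k x = 0 \<longleftrightarrow> x = 0"
  by (rule ring_aut.eq_0_iff[OF ring_aut_shift])

lemma shift_mult: "shift k (x * y) = shift k x * shift k y"
  using ring_aut_shift by (simp add: ring_aut_def comm_ring_hom.hom_mult)

lemma shift_one [simp]: "shift k 1 = 1"
  using ring_aut_shift by (simp add: ring_aut_def comm_ring_hom.hom_one)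

lemma shift_power: "shift k (x ^ n) = shift k x ^ n"
  using ring_aut_shift by (simp add: ring_aut_def comm_ring_hom.hom_power)

lemma shift_dvd_shift_iff [simp]: "shift k x dvd shift k y \<longleftrightarrow> x dvd y"
  by (rule ring_aut.dvd_iff[OF ring_aut_shift])

lemma shift_dvd_iff: "shift k x dvd y \<longleftrightarrow> x dvd shift (- k) y"
  using shift_dvd_shift_iff[of k x "shift (- k) y"] by simp

lemma dvd_shift_iff: "x dvd shift k y \<longleftrightarrow> shift (- k) x dvd y"
  using shift_dvd_shift_iff[of "- k" x "shift k y"] by simp

lemma prime_elem_shift: "prime_elem x \<Longrightarrow> prime_elem (shift k x)"
  by (rule ring_aut_prime_elem[OF ring_aut_shift])

lemma multiplicity_shift: "multiplicity (shift a x) (shift b y) = multiplicity (shift (a - b) x) y"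
  using ring_aut_multiplicity[OF ring_aut_shift, of "- b" "shift a x" "shift b y"] by simp

lemma multiplicity_shift_right: "multiplicity x (shift k y) = multiplicity (shift (- k) x) y"
  using multiplicity_shift[of 0 x k y] by simp

lemma sig_fract_Fract:
  assumes "b \<noteq> 0"
  shows "sig_fract s tt (Fract a b) = Fract (sig_poly s tt a) (sig_poly s tt b)"
proof -
  interpret sig: ring_aut "sig_poly s tt" by (rule ring_aut_sig_poly)
  obtain a' b' where q: "quot_of_fract (Fract a b) = (a', b')" by fastforce
  have "b' \<noteq> 0"
    using q quot_of_fract_in_normalized_fracts[of "Fract a b"] not_normalized_fracts_0_denom by metis
  moreover have "Fract a' b' = Fract a b"
    using Fract_quot_of_fract[of "Fract a b"] q by simp
  ultimately have "a' * b = a * b'"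
    using assms by (simp add: eq_fract)
  then have "sig_poly s tt a' * sig_poly s tt b = sig_poly s tt a * sig_poly s tt b'"
    by (metis sig.hom_mult)
  with \<open>b' \<noteq> 0\<close> assms show ?thesis
    by (simp add: sig_fract_def q eq_fract)
qed

lemma sig_fract_to_fract [simp]: "sig_fract s tt (to_fract a) = to_fract (sig_poly s tt a)"
  using ring_aut_sig_poly by (simp add: to_fract_def sig_fract_Fract ring_aut_def comm_ring_hom.hom_one)

lemma ring_aut_sig_fract: "ring_aut (sig_fract s tt)"
proof -
  interpret sig: ring_aut "sig_poly s tt" by (rule ring_aut_sig_poly)
  have hom: "comm_ring_hom (sig_fract s tt)"
  proof
    show "sig_fract s tt (x + y) = sig_fract s tt x + sig_fract s tt y" for x y
      by (induction x; induction y) (simp add: sig_fract_Fract sig.hom_add sig.hom_mult)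
    show "sig_fract s tt (x * y) = sig_fract s tt x * sig_fract s tt y" for x y
      by (induction x; induction y) (simp add: sig_fract_Fract sig.hom_mult)
    show "sig_fract s tt 1 = 1"
      by (simp add: One_fract_def sig_fract_Fract sig.hom_one)
  qed
  have "inj (sig_fract s tt)"
  proof (rule injI)
    fix x y assume "sig_fract s tt x = sig_fract s tt y"
    then have "sig_fract s tt (x - y) = 0"
      by (simp add: comm_ring_hom.hom_diff[OF hom])
    moreover obtain a b where "x - y = Fract a b" and "b \<noteq> 0"
      by (cases "x - y")
    ultimately have "sig_poly s tt a = 0"
      by (metis sig_fract_Fract Zero_fract_def eq_fract(1) mult_1_right mult_zero_left one_neq_zero sig.eq_0_iff)
    with \<open>x - y = Fract a b\<close> show "x = y"
      by (metis Zero_fract_def eq_fract(3) right_minus_eq sig.eq_0_iff)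
  qed
  moreover have "surj (sig_fract s tt)"
  proof -
    have "x \<in> range (sig_fract s tt)" for x
    proof (induction x)
      case (Fract a b)
      then have "Fract a b = sig_fract s tt (Fract (inv (sig_poly s tt) a) (inv (sig_poly s tt) b))"
        by (subst sig_fract_Fract) (simp_all, metis sig.apply_inv sig.hom_zero)
      then show ?case by blast
    qed
    then show ?thesis by blast
  qed
  ultimately show ?thesis
    using hom by (simp add: ring_aut_def ring_aut_axioms_def bij_def)
qed

lemma ipow_sig_fract_to_fract: "ipow (sig_fract s tt) k (to_fract a) = to_fract (shift k a)"
  using ring_aut_sig_fract bij_sig_poly
  by (intro ipow_commute[symmetric]) (simp_all add: ring_aut_def ring_aut_axioms_def)

end

lemma dvd_degree_eq_imp_smult:
  fixes p q :: "'a::field poly"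
  assumes "p dvd q" and "q \<noteq> 0" and "degree p = degree q"
  obtains u where "u \<noteq> 0" and "q = smult u p"
proof -
  obtain r where r: "q = p * r" using assms(1) by blast
  with assms have "degree r = 0" by (auto simp: degree_mult_eq)
  then have "r = [:coeff r 0:]" by (rule degree_0_id[symmetric])
  then have "q = smult (coeff r 0) p"
    using r by (metis mult.commute mult_smult_left mult_1 smult_one)
  moreover from this have "coeff r 0 \<noteq> 0"
    using assms(2) by auto
  ultimately show ?thesis using that by blast
qed

lemma degree_ge_1_if_prime_elem:
  fixes g :: "'a::field poly"
  shows "prime_elem g \<Longrightarrow> 1 \<le> degree g"
  using is_unit_iff_degree[of g] by (auto simp: prime_elem_def)

lemma per_mult_ap: "per isSigma a * ap isSigma a = a"
proof -
  have "per isSigma a dvd a"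
    using order_1[of 0 a] by (simp add: per_def monom_altdef)
  then show ?thesis by (simp add: ap_def)
qed

lemma ap_eq_0_iff [simp]: "ap isSigma a = 0 \<longleftrightarrow> a = 0"
proof
  assume "ap isSigma a = 0"
  then show "a = 0" using per_mult_ap[of isSigma a] by simp
qed (simp add: ap_def)

lemma ap_dvd: "ap isSigma a dvd a"
  using dvd_triv_right[of "ap isSigma a" "per isSigma a"] by (simp add: per_mult_ap)

lemma t_not_dvd_ap:
  fixes a :: "'a::field poly"
  assumes "a \<noteq> 0" and "\<not> isSigma"
  shows "\<not> [:0, 1:] dvd ap isSigma a"
proof
  assume "[:0, 1:] dvd ap isSigma a"
  then have "per isSigma a * [:0, 1:] dvd per isSigma a * ap isSigma a"
    by (rule mult_dvd_mono[OF dvd_refl])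
  moreover have "per isSigma a = [:0, 1:] ^ order 0 a"
    using \<open>\<not> isSigma\<close> by (simp add: per_def monom_altdef)
  ultimately have "[:0, 1:] ^ Suc (order 0 a) dvd a"
    by (metis per_mult_ap power_Suc2)
  then show False
    using order_2[OF \<open>a \<noteq> 0\<close>, of 0] by simp
qed

text \<open>A prime h is per_free iff it divides no per(a).\<close>

definition per_free :: "bool \<Rightarrow> 'a::field poly \<Rightarrow> bool" where
  "per_free isSigma h \<longleftrightarrow> isSigma \<or> \<not> h dvd [:0, 1:]"

locale PiSigma_extension =
  fixes s :: "'a::{field_char_0,field_gcd} \<Rightarrow> 'a" and tt :: "'a poly" and isSigma :: bool
  assumes PiSigma_ext: "PiSigma_ext s tt isSigma"

sublocale PiSigma_extension \<subseteq> poly_difference_field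
  using PiSigma_ext by unfold_locales (auto simp: PiSigma_ext_def split: if_splits)

context PiSigma_extension
begin

lemma sig_poly_fixed_imp_const:
  assumes "sig_poly s tt q = q"
  shows "degree q = 0"
proof -
  have "to_fract q \<in> {f. sig_fract s tt f = f}"
    using assms by simp
  then obtain c where "to_fract q = to_fract [:c:]"
    using PiSigma_ext unfolding PiSigma_ext_def by blast
  then show ?thesis by simp
qed

lemma semi_invariant_Sigma:
  assumes "isSigma" and "g \<noteq> 0" and sig: "sig_poly s tt g = smult u g"
  shows "degree g = 0"
proof -
  obtain beta where tt: "tt = [:beta, 1:]"
    using PiSigma_ext \<open>isSigma\<close> by (auto simp: PiSigma_ext_def)
  define c where "c = lead_coeff g"
  have "c \<noteq> 0" using \<open>g \<noteq> 0\<close> by (simp add: c_def)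
  have "lead_coeff (sig_poly s tt g) = s c"
    by (simp add: sig_poly_def tt lead_coeff_comp lead_coeff_map_poly_nz c_def \<open>g \<noteq> 0\<close>)
  moreover have "u \<noteq> 0"
    using sig \<open>g \<noteq> 0\<close> ring_aut.eq_0_iff[OF ring_aut_sig_poly] by fastforce
  ultimately have "s c = u * c"
    using sig by (simp add: c_def)
  with \<open>c \<noteq> 0\<close> \<open>u \<noteq> 0\<close> have "s (1 / c) * u = 1 / c"
    using ring_aut_s by (simp add: comm_ring_hom_divide ring_aut_def comm_ring_hom.hom_one)
  then have "sig_poly s tt (smult (1 / c) g) = smult (1 / c) g"
    by (simp add: sig_poly_smult sig)
  then show ?thesis
    using sig_poly_fixed_imp_const \<open>c \<noteq> 0\<close> by fastforce
qed

lemma semi_invariant_Pi: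
  assumes "\<not> isSigma" and "g \<noteq> 0" and "u \<noteq> 0" and sig: "sig_poly s tt g = smult u g"
  shows "g = monom (lead_coeff g) (degree g)"
proof -
  obtain alpha where tt: "tt = [:0, alpha:]" and "alpha \<noteq> 0"
    using PiSigma_ext \<open>\<not> isSigma\<close> by (auto simp: PiSigma_ext_def)
  have coeff_sig: "coeff (sig_poly s tt p) i = alpha ^ i * s (coeff p i)" for p i
    by (simp add: sig_poly_def tt coeff_pcompose_linear coeff_map_poly)
  have coeff_g: "s (coeff g i) = u * coeff g i / alpha ^ i" for i
    using coeff_sig[of g i] sig \<open>alpha \<noteq> 0\<close> by (simp add: field_simps)
  define N where "N = degree g"
  have "coeff g i = 0" if "i < N" for i
  proof (rule ccontr)
    assume "coeff g i \<noteq> 0"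
    define c where "c = lead_coeff g / coeff g i"
    have "c \<noteq> 0" using \<open>coeff g i \<noteq> 0\<close> \<open>g \<noteq> 0\<close> by (simp add: c_def)
    have "alpha ^ N = alpha ^ (N - i) * alpha ^ i"
      using that by (simp flip: power_add)
    then have "alpha ^ (N - i) * s c = c"
      using \<open>alpha \<noteq> 0\<close> \<open>u \<noteq> 0\<close> \<open>coeff g i \<noteq> 0\<close> \<open>g \<noteq> 0\<close>
      by (simp add: c_def N_def coeff_g comm_ring_hom_divide ring_aut_s[unfolded ring_aut_def] field_simps)
    then have "sig_poly s tt (monom c (N - i)) = monom c (N - i)"
      by (intro poly_eqI) (auto simp: coeff_sig coeff_monom)
    then show False
      using sig_poly_fixed_imp_const \<open>c \<noteq> 0\<close> that by (fastforce simp: degree_monom_eq)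
  qed
  then show ?thesis
    by (intro poly_eqI) (auto simp: coeff_monom N_def coeff_eq_0 dest: linorder_neqE_nat)
qed

lemma funpow_sig_poly_dvd_imp_not_per_free:
  assumes h: "prime_elem h" and "n > 0" and dvd: "h dvd (sig_poly s tt ^^ n) h"
  shows "\<not> per_free isSigma h"
proof -
  interpret sig: ring_aut "sig_poly s tt" by (rule ring_aut_sig_poly)
  have "h \<noteq> 0" using h by (simp add: prime_elem_def)
  have "(sig_poly s tt ^^ n) h \<noteq> 0" and "degree h = degree ((sig_poly s tt ^^ n) h)"
    using \<open>h \<noteq> 0\<close> shift_eq_0_iff[of "int n" h] degree_shift[of "int n" h] by (simp_all add: ipow_int)
  then obtain u where "u \<noteq> 0" and u: "(sig_poly s tt ^^ n) h = smult u h"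
    by (rule dvd_degree_eq_imp_smult[OF dvd])
  text \<open>The product of the orbit segment of h is semi-invariant and divisible by h.\<close>
  define g where "g = (\<Prod>j<n. (sig_poly s tt ^^ j) h)"
  have "h * sig_poly s tt g = (\<Prod>j<Suc n. (sig_poly s tt ^^ j) h)"
    by (simp add: g_def sig.hom_prod prod.lessThan_Suc_shift del: prod.lessThan_Suc)
  also have "\<dots> = h * smult u g"
    by (simp add: g_def u mult.commute)
  finally have sig_g: "sig_poly s tt g = smult u g"
    using \<open>h \<noteq> 0\<close> by (metis mult_cancel_left mult_smult_right)
  have "g \<noteq> 0"
    using \<open>h \<noteq> 0\<close> ring_aut_funpow[OF ring_aut_sig_poly]
    by (simp add: g_def ring_aut.eq_0_iff)
  have "h dvd g"
    using dvd_prodI[of "{..<n}" 0 "\<lambda>j. (sig_poly s tt ^^ j) h"] \<open>n > 0\<close> by (simp add: g_def)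
  then have "1 \<le> degree g"
    using degree_ge_1_if_prime_elem[OF h] dvd_imp_degree_le[OF _ \<open>g \<noteq> 0\<close>] by fastforce
  show ?thesis
  proof (cases isSigma)
    case True
    then show ?thesis
      using semi_invariant_Sigma[OF True \<open>g \<noteq> 0\<close> sig_g] \<open>1 \<le> degree g\<close> by simp
  next
    case False
    then have "g = smult (lead_coeff g) ([:0, 1:] ^ degree g)"
      using semi_invariant_Pi[OF False \<open>g \<noteq> 0\<close> \<open>u \<noteq> 0\<close> sig_g] by (simp add: monom_altdef)
    then have "h dvd [:0, 1:] ^ degree g"
      using \<open>h dvd g\<close> \<open>g \<noteq> 0\<close> dvd_smult_cancel[of h "lead_coeff g"] by fastforce
    with False h show ?thesis
      by (auto simp: per_free_def dest: prime_elem_dvd_power)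
  qed
qed

lemma shift_dvd_shift_imp_eq:
  assumes h: "prime_elem h" and "per_free isSigma h" and dvd: "shift a h dvd shift b h"
  shows "a = b"
proof (rule ccontr)
  assume "a \<noteq> b"
  have "h \<noteq> 0" using h by (simp add: prime_elem_def)
  obtain u where "u \<noteq> 0" and "shift b h = smult u (shift a h)"
    using dvd_degree_eq_imp_smult[OF dvd] \<open>h \<noteq> 0\<close> by (metis degree_shift shift_eq_0_iff)
  then have "shift b h dvd shift a h"
    by (simp add: smult_dvd_iff)
  obtain a' b' where "a' < b'" and "shift a' h dvd shift b' h"
  proof (cases "a < b")
    case True
    then show ?thesis using dvd by (rule that)
  next
    case False
    with \<open>a \<noteq> b\<close> have "b < a" by simp
    then show ?thesis using \<open>shift b h dvd shift a h\<close> by (rule that)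
  qed
  moreover have "shift (b' - a') h = (sig_poly s tt ^^ nat (b' - a')) h"
    using \<open>a' < b'\<close> by (simp add: ipow_def)
  moreover have "shift a' (shift (b' - a') h) = shift b' h"
    by (simp add: algebra_simps)
  ultimately have "h dvd (sig_poly s tt ^^ nat (b' - a')) h"
    by (metis shift_dvd_shift_iff)
  moreover have "0 < nat (b' - a')"
    using \<open>a' < b'\<close> by simp
  ultimately show False
    using funpow_sig_poly_dvd_imp_not_per_free[OF h] \<open>per_free isSigma h\<close> by blast
qed

lemma finite_shifts_dvd:
  assumes "prime_elem q" and "per_free isSigma q" and "d \<noteq> 0"
  shows "finite {k. shift k q dvd d}"
proof -
  have "inj_on (\<lambda>k. normalize (shift k q)) {k. shift k q dvd d}"
  proof (rule inj_onI)
    fix i j assume "normalize (shift i q) = normalize (shift j q)"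
    then have "shift i q dvd shift j q"
      by (metis dvd_normalize_iff dvd_refl)
    then show "i = j"
      by (rule shift_dvd_shift_imp_eq[OF assms(1,2)])
  qed
  moreover have "(\<lambda>k. normalize (shift k q)) ` {k. shift k q dvd d} \<subseteq> prime_factors d"
    using assms prime_elem_shift by (auto simp: in_prime_factors_iff)
  ultimately show ?thesis
    by (metis finite_imageD finite_set_mset finite_subset)
qed

lemma per_free_shift_iff [simp]: "per_free isSigma (shift k h) \<longleftrightarrow> per_free isSigma h"
proof (cases isSigma)
  case False
  then obtain alpha where tt: "tt = [:0, alpha:]" and "alpha \<noteq> 0"
    using PiSigma_ext by (auto simp: PiSigma_ext_def)
  then have "sig_poly s tt [:0, 1:] = smult alpha [:0, 1:]"
    using ring_aut_s
    by (simp add: sig_poly_def map_poly_pCons pcompose_pCons ring_aut_def comm_ring_hom.hom_one)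
  then have "sig_poly s tt x dvd [:0, 1:] \<longleftrightarrow> x dvd [:0, 1:]" for x
    using ring_aut.dvd_iff[OF ring_aut_sig_poly, of x "[:0, 1:]"]
      dvd_smult_iff[OF \<open>alpha \<noteq> 0\<close>, of "sig_poly s tt x" "[:0, 1:]"] by simp
  then show ?thesis
    using ipow_invariant[OF bij_sig_poly, of "\<lambda>x. x dvd [:0, 1:]"] by (simp add: per_free_def)
qed (simp add: per_free_def)

lemma per_free_if_dvd_ap:
  assumes "prime_elem g" and "a \<noteq> 0" and "g dvd ap isSigma a"
  shows "per_free isSigma g"
proof (cases isSigma)
  case False
  show ?thesis
  proof (unfold per_free_def, intro disjI2 notI)
    assume dvd: "g dvd [:0, 1:]"
    have "degree g = degree [:0, 1::'a:]"
      using degree_ge_1_if_prime_elem[OF assms(1)] dvd_imp_degree_le[OF dvd] by simp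
    then obtain u where "u \<noteq> 0" and "[:0, 1:] = smult u g"
      using dvd_degree_eq_imp_smult[OF dvd] by auto
    then have "[:0, 1:] dvd ap isSigma a"
      using assms(3) by (simp add: smult_dvd_iff)
    with t_not_dvd_ap[OF \<open>a \<noteq> 0\<close> False] show False ..
  qed
qed (simp add: per_free_def)

lemma dvd_shift_ap:
  assumes g: "prime_elem g" and "per_free isSigma g" and "g dvd shift k a"
  shows "g dvd shift k (ap isSigma a)"
proof -
  have "\<not> g dvd shift k (per isSigma a)"
  proof (cases isSigma)
    case True
    with g show ?thesis
      by (simp add: per_def prime_elem_def)
  next
    case False
    have "\<not> shift (- k) g dvd [:0, 1:]"
      using \<open>per_free isSigma g\<close> False per_free_shift_iff[of "- k" g] by (simp add: per_free_def)
    then have "\<not> g dvd shift k [:0, 1:]"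
      by (simp add: shift_dvd_iff)
    then show ?thesis
      using False g by (auto simp: per_def monom_altdef shift_power dest: prime_elem_dvd_power)
  qed
  moreover have "shift k a = shift k (per isSigma a) * shift k (ap isSigma a)"
    by (simp add: per_mult_ap flip: shift_mult)
  ultimately show ?thesis
    using \<open>g dvd shift k a\<close> by (simp add: prime_elem_dvd_mult_iff[OF g])
qed

lemma shift_unique_of_dvd:
  assumes g: "prime_elem g" and "per_free isSigma g" and f: "prime f"
    and "g dvd shift i f" and "g dvd shift j f"
  shows "i = j"
proof -
  have "normalize (shift (- k) g) = f" if "g dvd shift k f" for k
    using that f prime_elem_shift[OF g, of "- k"]
    by (intro primes_dvd_imp_eq) (simp_all add: dvd_shift_iff)
  then have "normalize (shift (- i) g) dvd normalize (shift (- j) g)"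
    using assms(4,5) by simp
  then have "- i = - j"
    by (intro shift_dvd_shift_imp_eq[OF g \<open>per_free isSigma g\<close>]) simp
  then show ?thesis by simp
qed

lemma finite_spread_shift_ap:
  assumes "a \<noteq> 0" and "b \<noteq> 0"
  shows "finite (spread s tt (shift k (ap isSigma a)) b)"
proof -
  define a' where "a' = shift k (ap isSigma a)"
  have "a' \<noteq> 0" using \<open>a \<noteq> 0\<close> by (simp add: a'_def)
  have per_free: "per_free isSigma g" if "g \<in> prime_factors a'" for g
    using that per_free_if_dvd_ap[OF prime_elem_shift \<open>a \<noteq> 0\<close>, of g "- k"]
    by (simp add: a'_def in_prime_factors_iff shift_dvd_iff prime_imp_prime_elem)
  have "spread s tt a' b \<subseteq> (\<lambda>(g, f). THE j. g dvd shift (int j) f) ` (prime_factors a' \<times> prime_factors b)"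
  proof
    fix j assume "j \<in> spread s tt a' b"
    then have "\<not> is_unit (gcd a' (shift (int j) b))"
      using \<open>a' \<noteq> 0\<close> is_unit_iff_degree[of "gcd a' (shift (int j) b)"] by (simp add: spread_def ipow_int)
    moreover have "gcd a' (shift (int j) b) \<noteq> 0"
      using \<open>a' \<noteq> 0\<close> by simp
    ultimately obtain g where "prime g" and "g dvd gcd a' (shift (int j) b)"
      using prime_divisorE by blast
    then have g: "prime g" "g dvd a'" "g dvd shift (int j) b"
      by simp_all
    define f where "f = normalize (shift (- int j) g)"
    have "prime f"
      using prime_elem_shift[of g "- int j"] g(1) by (simp add: f_def)
    have "f dvd b"
      using g(3) by (simp add: f_def shift_dvd_iff)
    have "g dvd shift (int j) f"
      by (simp add: f_def dvd_shift_iff)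
    have "(g, f) \<in> prime_factors a' \<times> prime_factors b"
      using g \<open>prime f\<close> \<open>f dvd b\<close> \<open>a' \<noteq> 0\<close> \<open>b \<noteq> 0\<close> by (simp add: in_prime_factors_iff)
    moreover have "(THE i. g dvd shift (int i) f) = j"
    proof (rule the_equality)
      have "per_free isSigma g"
        using per_free g \<open>a' \<noteq> 0\<close> by (simp add: in_prime_factors_iff)
      then show "i = j" if "g dvd shift (int i) f" for i
        using shift_unique_of_dvd[OF _ _ \<open>prime f\<close> that \<open>g dvd shift (int j) f\<close>] g(1) by simp
    qed fact
    ultimately show "j \<in> (\<lambda>(g, f). THE j. g dvd shift (int j) f) ` (prime_factors a' \<times> prime_factors b)"
      by force
  qed
  then show ?thesis
    unfolding a'_def by (rule finite_surj[rotated]) simp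
qed

end

lemma matrix_inv_left:
  assumes "invertible A"
  shows "matrix_inv A ** A = mat 1"
  using assms unfolding invertible_def matrix_inv_def by (rule someI2_ex) auto

lemma sum_matrix_vector_mult: "sum f X *v v = (\<Sum>x\<in>X. f x *v v)"
  by (induction X rule: infinite_finite_induct) (auto simp: matrix_vector_mult_add_rdistrib)

lemma matrix_vector_mult_sum: "M *v sum f X = (\<Sum>x\<in>X. M *v f x)"
  by (induction X rule: infinite_finite_induct) (auto simp: matrix_vector_right_distrib)

lemma to_fract_prod: "to_fract (prod f A) = (\<Prod>x\<in>A. to_fract (f x))"
  by (induction A rule: infinite_finite_induct) auto

lemma to_fract_of_int: "to_fract (of_int z) = of_int z"
  by (induction z rule: int_induct[where k = 0]) simp_all

lemma det_fmat: "det (fmat M) = to_fract (det M)"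
  by (simp add: det_def fmat_def to_fract_prod to_fract_of_int)

lemma invertible_fmat: "det M \<noteq> 0 \<Longrightarrow> invertible (fmat M)"
  by (simp add: invertible_det_nz det_fmat)

context poly_difference_field
begin

lemma ring_aut_ipow_sig_fract: "ring_aut (ipow (sig_fract s tt) k)"
  by (rule ring_aut_ipow[OF ring_aut_sig_fract])

lemma sig_vec_add: "sig_vec s tt k (v + w) = sig_vec s tt k v + sig_vec s tt k w"
  using ring_aut_ipow_sig_fract
  by (simp add: sig_vec_def vec_eq_iff ring_aut_def comm_ring_hom.hom_add)

lemma sig_vec_zero [simp]: "sig_vec s tt k 0 = 0"
  using ring_aut_ipow_sig_fract
  by (simp add: sig_vec_def vec_eq_iff ring_aut_def comm_ring_hom.hom_zero)

lemma sig_mat_zero [simp]: "sig_mat s tt k 0 = 0"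
  using ring_aut_ipow_sig_fract
  by (simp add: sig_mat_def vec_eq_iff ring_aut_def comm_ring_hom.hom_zero)

lemma sig_vec_sum: "sig_vec s tt k (sum f X) = (\<Sum>x\<in>X. sig_vec s tt k (f x))"
  by (induction X rule: infinite_finite_induct) (simp_all add: sig_vec_add)

lemma sig_vec_matrix_vector_mult: "sig_vec s tt k (M *v v) = sig_mat s tt k M *v sig_vec s tt k v"
  using ring_aut_ipow_sig_fract
  by (simp add: sig_vec_def sig_mat_def vec_eq_iff matrix_vector_mult_def ring_aut_def
      comm_ring_hom.hom_sum comm_ring_hom.hom_mult)

lemma sig_vec_sig_vec: "sig_vec s tt k (sig_vec s tt j v) = sig_vec s tt (k + j) v"
  using ring_aut_sig_fract
  by (simp add: sig_vec_def vec_eq_iff ipow_add ring_aut_def ring_aut_axioms_def)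

lemma sig_vec_quotient:
  "sig_vec s tt k (\<chi> i. to_fract (z$i) / to_fract d) = (\<chi> i. to_fract (shift k (z$i)) / to_fract (shift k d))"
  using ring_aut_ipow_sig_fract
  by (simp add: sig_vec_def ipow_sig_fract_to_fract comm_ring_hom_divide ring_aut_def)

lemma op_apply_eq_sum:
  assumes "finite F" and "{i. P i \<noteq> 0} \<subseteq> F"
  shows "op_apply s tt P y = (\<Sum>i\<in>F. P i *v sig_vec s tt i y)"
  unfolding op_apply_def using assms by (intro sum.mono_neutral_left) auto

lemma op_mult_support:
  "{k. op_mult s tt P Q k \<noteq> 0} \<subseteq> (\<lambda>(i, j). i + j) ` ({i. P i \<noteq> 0} \<times> {j. Q j \<noteq> 0})"
proof
  fix k assume "k \<in> {k. op_mult s tt P Q k \<noteq> 0}"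
  then have "\<exists>i\<in>{i. P i \<noteq> 0}. P i ** sig_mat s tt i (Q (k - i)) \<noteq> 0"
    unfolding op_mult_def by (metis (mono_tags, lifting) mem_Collect_eq sum.neutral)
  then obtain i where "P i \<noteq> 0" and "Q (k - i) \<noteq> 0"
    by force
  then show "k \<in> (\<lambda>(i, j). i + j) ` ({i. P i \<noteq> 0} \<times> {j. Q j \<noteq> 0})"
    by (intro image_eqI[of _ _ "(i, k - i)"]) simp_all
qed

lemma op_apply_op_mult:
  assumes "finsupp P" and "finsupp Q"
  shows "op_apply s tt (op_mult s tt P Q) y = op_apply s tt P (op_apply s tt Q y)"
proof -
  define SP SQ where "SP = {i. P i \<noteq> 0}" and "SQ = {i. Q i \<noteq> 0}"
  define T where "T = (\<lambda>(i, j). i + j) ` (SP \<times> SQ)"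
  have "finite SP" "finite SQ" "finite T"
    using assms by (auto simp: finsupp_def SP_def SQ_def T_def)
  have "op_apply s tt (op_mult s tt P Q) y
      = (\<Sum>k\<in>T. \<Sum>i\<in>SP. (P i ** sig_mat s tt i (Q (k - i))) *v sig_vec s tt k y)"
    using op_mult_support[of P Q]
    by (simp add: op_apply_eq_sum[OF \<open>finite T\<close>] T_def SP_def SQ_def op_mult_def sum_matrix_vector_mult)
  also have "\<dots> = (\<Sum>i\<in>SP. \<Sum>j\<in>SQ. (P i ** sig_mat s tt i (Q j)) *v sig_vec s tt (i + j) y)"
  proof (subst sum.swap, rule sum.cong[OF refl])
    fix i assume "i \<in> SP"
    then have "(\<Sum>k\<in>T. (P i ** sig_mat s tt i (Q (k - i))) *v sig_vec s tt k y)
        = (\<Sum>k\<in>(+) i ` SQ. (P i ** sig_mat s tt i (Q (k - i))) *v sig_vec s tt k y)"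
    proof (intro sum.mono_neutral_right[OF \<open>finite T\<close>] ballI)
      show "(+) i ` SQ \<subseteq> T" using \<open>i \<in> SP\<close> by (auto simp: T_def)
      fix k assume "k \<in> T - (+) i ` SQ"
      then have "Q (k - i) = 0"
        using image_eqI[of k "(+) i" "k - i" SQ] by (auto simp: SQ_def)
      then show "(P i ** sig_mat s tt i (Q (k - i))) *v sig_vec s tt k y = 0" by simp
    qed
    also have "\<dots> = (\<Sum>j\<in>SQ. (P i ** sig_mat s tt i (Q j)) *v sig_vec s tt (i + j) y)"
      by (subst sum.reindex) (auto simp: inj_on_def)
    finally show "(\<Sum>k\<in>T. (P i ** sig_mat s tt i (Q (k - i))) *v sig_vec s tt k y)
        = (\<Sum>j\<in>SQ. (P i ** sig_mat s tt i (Q j)) *v sig_vec s tt (i + j) y)" .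
  qed
  also have "\<dots> = op_apply s tt P (op_apply s tt Q y)"
    by (simp add: op_apply_def SP_def SQ_def sig_vec_sum sig_vec_matrix_vector_mult sig_vec_sig_vec
        matrix_vector_mult_sum matrix_vector_mul_assoc)
  finally show ?thesis .
qed

lemma finsupp_poly_op: "finsupp (poly_op l A)"
  unfolding finsupp_def poly_op_def by (rule finite_subset[of _ "{0..int l}"]) auto

lemma op_apply_poly_op:
  "op_apply s tt (poly_op l A) y = (\<Sum>k\<in>{0..int l}. fmat (A (nat k)) *v sig_vec s tt k y)"
  by (subst op_apply_eq_sum[of "{0..int l}"]) (auto simp: poly_op_def intro: sum.cong)

end

definition clears_denoms :: "'a::idom \<Rightarrow> ('a fract)^'n \<Rightarrow> bool" where
  "clears_denoms c w \<longleftrightarrow> (\<forall>i. to_fract c * w$i \<in> range to_fract)"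

definition reduced_repr :: "'a::algebraic_semidom \<Rightarrow> 'a^'n \<Rightarrow> bool" where
  "reduced_repr d z \<longleftrightarrow> (\<forall>c. c dvd d \<and> (\<forall>i. c dvd z$i) \<longrightarrow> is_unit c)"

lemma range_to_fract_add: "x \<in> range to_fract \<Longrightarrow> y \<in> range to_fract \<Longrightarrow> x + y \<in> range to_fract"
  by (auto simp flip: to_fract_add)

lemma range_to_fract_diff: "x \<in> range to_fract \<Longrightarrow> y \<in> range to_fract \<Longrightarrow> x - y \<in> range to_fract"
  by (auto simp flip: to_fract_diff)

lemma range_to_fract_mult: "x \<in> range to_fract \<Longrightarrow> y \<in> range to_fract \<Longrightarrow> x * y \<in> range to_fract"
  by (auto simp flip: to_fract_mult)

lemma range_to_fract_sum: "(\<And>x. x \<in> X \<Longrightarrow> f x \<in> range to_fract) \<Longrightarrow> sum f X \<in> range to_fract"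
  by (induction X rule: infinite_finite_induct) (auto intro: range_to_fract_add image_eqI[of 0 to_fract 0])

lemma clears_denoms_diff: "clears_denoms c v \<Longrightarrow> clears_denoms c w \<Longrightarrow> clears_denoms c (v - w)"
  by (simp add: clears_denoms_def right_diff_distrib range_to_fract_diff)

lemma clears_denoms_sum: "(\<And>x. x \<in> X \<Longrightarrow> clears_denoms c (f x)) \<Longrightarrow> clears_denoms c (sum f X)"
  by (simp add: clears_denoms_def sum_distrib_left range_to_fract_sum)

lemma clears_denoms_fvec: "clears_denoms c (fvec b)"
  by (auto simp: clears_denoms_def fvec_def simp flip: to_fract_mult)

lemma clears_denoms_fmat_mult:
  assumes "clears_denoms c w"
  shows "clears_denoms c (fmat M *v w)"
proof -
  have "to_fract c * (fmat M *v w)$i = (\<Sum>j\<in>UNIV. to_fract (M$i$j) * (to_fract c * w$j))" for i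
    by (simp add: matrix_vector_mult_def fmat_def sum_distrib_left mult_ac)
  moreover have "(\<Sum>j\<in>UNIV. to_fract (M$i$j) * (to_fract c * w$j)) \<in> range to_fract" for i
    by (intro range_to_fract_sum, rule range_to_fract_mult[OF rangeI]) (use assms in \<open>simp add: clears_denoms_def\<close>)
  ultimately show ?thesis by (simp add: clears_denoms_def)
qed

lemma clears_denoms_common_denom_mult:
  assumes "common_denom m N" and "clears_denoms c w"
  shows "clears_denoms (m * c) (N *v w)"
proof -
  have "to_fract (m * c) * (N *v w)$i = (\<Sum>j\<in>UNIV. (to_fract m * N$i$j) * (to_fract c * w$j))" for i
    by (simp add: matrix_vector_mult_def sum_distrib_left mult_ac)
  moreover have "(\<Sum>j\<in>UNIV. (to_fract m * N$i$j) * (to_fract c * w$j)) \<in> range to_fract" for i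
    by (intro range_to_fract_sum, rule range_to_fract_mult)
      (use assms in \<open>simp_all add: clears_denoms_def common_denom_def\<close>)
  ultimately show ?thesis by (simp add: clears_denoms_def)
qed

lemma clears_denoms_quotient:
  assumes "d dvd e" and "d \<noteq> 0"
  shows "clears_denoms e (\<chi> i. to_fract (z$i) / to_fract d)"
proof -
  obtain k where "e = d * k" using assms(1) ..
  with assms(2) have "to_fract e * (to_fract (z$i) / to_fract d) = to_fract (k * z$i)" for i
    by simp
  then show ?thesis unfolding clears_denoms_def vec_lambda_beta by (metis rangeI)
qed

lemma reduced_repr_denom_dvd:
  fixes d c :: "'a::{field_char_0,field_gcd} poly"
  assumes "clears_denoms c (\<chi> i. to_fract (z$i) / to_fract d)" and "d \<noteq> 0" and "reduced_repr d z"
  shows "d dvd c"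
proof -
  have "d dvd c * z$i" for i
  proof -
    obtain q where "to_fract c * (to_fract (z$i) / to_fract d) = to_fract q"
      using assms(1) by (auto simp: clears_denoms_def)
    with \<open>d \<noteq> 0\<close> have "to_fract c * to_fract (z$i) = to_fract q * to_fract d"
      by (simp add: field_simps)
    then have "c * z$i = q * d"
      by (simp only: to_fract_eq_iff flip: to_fract_mult)
    then show ?thesis by (metis dvd_triv_right)
  qed
  define X where "X = insert d (range (\<lambda>i. z$i))"
  have "d dvd Gcd ((*) c ` X)"
    using \<open>\<And>i. d dvd c * z$i\<close> by (auto simp: X_def intro!: Gcd_greatest)
  then have "d dvd c * Gcd X"
    by (simp add: Gcd_mult)
  moreover have "Gcd X dvd d" and "\<forall>i. Gcd X dvd z$i"
    using Gcd_dvd[of _ X] by (simp_all add: X_def)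
  then have "is_unit (Gcd X)"
    using assms(3) by (simp add: reduced_repr_def)
  ultimately show ?thesis by (simp add: dvd_mult_unit_iff)
qed

context poly_difference_field
begin

lemma reduced_repr_shift:
  assumes "reduced_repr d z"
  shows "reduced_repr (shift k d) (\<chi> i. shift k (z$i))"
  unfolding reduced_repr_def
proof (intro allI impI)
  fix c assume "c dvd shift k d \<and> (\<forall>i. c dvd (\<chi> i. shift k (z$i))$i)"
  then have "shift (- k) c dvd d \<and> (\<forall>i. shift (- k) c dvd z$i)"
    by (simp add: dvd_shift_iff)
  then have "is_unit (shift (- k) c)"
    using assms by (simp add: reduced_repr_def)
  then show "is_unit c"
    using ring_aut.dvd_1_iff[OF ring_aut_shift] by metis
qed

lemma shift_denom_dvd_of_solution:
  fixes z :: "('a poly)^'n::finite"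
  assumes "invertible M" and "common_denom c (matrix_inv M)"
    and eq: "M *v sig_vec s tt j (\<chi> i. to_fract (z$i) / to_fract d) + w = fvec b"
    and "clears_denoms e w" and "d \<noteq> 0" and "reduced_repr d z"
  shows "shift j d dvd c * e"
proof -
  have "sig_vec s tt j (\<chi> i. to_fract (z$i) / to_fract d) = matrix_inv M *v (fvec b - w)"
    using eq matrix_inv_left[OF \<open>invertible M\<close>]
    by (metis add_diff_cancel_right' matrix_vector_mul_assoc matrix_vector_mul_lid)
  moreover have "clears_denoms (c * e) (matrix_inv M *v (fvec b - w))"
    using assms(2,4) by (intro clears_denoms_common_denom_mult clears_denoms_diff clears_denoms_fvec)
  ultimately have "clears_denoms (c * e) (\<chi> i. to_fract (shift j (z$i)) / to_fract (shift j d))"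
    by (simp add: sig_vec_quotient)
  then show ?thesis
    using reduced_repr_denom_dvd[of "c * e" "\<chi> i. shift j (z$i)" "shift j d"]
      \<open>d \<noteq> 0\<close> reduced_repr_shift[OF \<open>reduced_repr d z\<close>] by simp
qed

lemma clears_denoms_shifted_term:
  assumes "k \<in> K" and "finite K" and "d \<noteq> 0"
  shows "clears_denoms (Lcm ((\<lambda>k. shift k d) ` K)) (fmat N *v sig_vec s tt k (\<chi> i. to_fract (z$i) / to_fract d))"
proof -
  have "clears_denoms (Lcm ((\<lambda>k. shift k d) ` K)) (\<chi> i. to_fract ((\<chi> i. shift k (z$i))$i) / to_fract (shift k d))"
    using assms by (intro clears_denoms_quotient) (simp_all add: dvd_Lcm)
  then show ?thesis by (simp add: sig_vec_quotient clears_denoms_fmat_mult)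
qed

lemma shift_denom_dvd_leading:
  fixes A :: "nat \<Rightarrow> ('a poly)^'n::finite^'n"
  assumes "det (A l) \<noteq> 0" and "common_denom m (matrix_inv (fmat (A l)))"
    and "d \<noteq> 0" and "reduced_repr d z"
    and sol: "op_apply s tt (poly_op l A) (\<chi> i. to_fract (z$i) / to_fract d) = fvec b"
  shows "shift l d dvd m * Lcm ((\<lambda>k. shift k d) ` {0..<int l})"
proof (rule shift_denom_dvd_of_solution[OF invertible_fmat[OF assms(1)] assms(2) _ _ assms(3,4)])
  have "{0..int l} = insert (int l) {0..<int l}" by auto
  then show "fmat (A l) *v sig_vec s tt (int l) (\<chi> i. to_fract (z$i) / to_fract d)
      + (\<Sum>k\<in>{0..<int l}. fmat (A (nat k)) *v sig_vec s tt k (\<chi> i. to_fract (z$i) / to_fract d)) = fvec b"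
    using sol by (simp add: op_apply_poly_op)
qed (intro clears_denoms_sum clears_denoms_shifted_term \<open>d \<noteq> 0\<close>; simp)

lemma denom_dvd_trailing:
  fixes A :: "nat \<Rightarrow> ('a poly)^'n::finite^'n" and At :: "nat \<Rightarrow> ('a poly)^'n^'n"
  assumes "unimodular s tt P" and "op_mult s tt P (poly_op l A) = poly_op lt At"
    and "op_apply s tt P (fvec b) = fvec bt"
    and "det (At 0) \<noteq> 0" and "common_denom p (matrix_inv (fmat (At 0)))"
    and "d \<noteq> 0" and "reduced_repr d z"
    and sol: "op_apply s tt (poly_op l A) (\<chi> i. to_fract (z$i) / to_fract d) = fvec b"
  shows "d dvd p * Lcm ((\<lambda>k. shift k d) ` {1..int lt})"
proof -
  define y where "y = (\<chi> i. to_fract (z$i) / to_fract d)"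
  have "finsupp P" using assms(1) by (simp add: unimodular_def)
  have "op_apply s tt (poly_op lt At) y = op_apply s tt P (op_apply s tt (poly_op l A) y)"
    unfolding assms(2)[symmetric] by (rule op_apply_op_mult[OF \<open>finsupp P\<close> finsupp_poly_op])
  also have "\<dots> = fvec bt" using sol assms(3) by (simp add: y_def)
  finally have sol': "op_apply s tt (poly_op lt At) y = fvec bt" .
  have "{0..int lt} = insert 0 {1..int lt}" by auto
  with sol' have "fmat (At 0) *v sig_vec s tt 0 y
      + (\<Sum>k\<in>{1..int lt}. fmat (At (nat k)) *v sig_vec s tt k y) = fvec bt"
    by (simp add: op_apply_poly_op)
  then have "shift 0 d dvd p * Lcm ((\<lambda>k. shift k d) ` {1..int lt})"
    unfolding y_def
    by (rule shift_denom_dvd_of_solution[OF invertible_fmat[OF assms(4)] assms(5) _ _ assms(6,7)])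
      (intro clears_denoms_sum clears_denoms_shifted_term \<open>d \<noteq> 0\<close>; simp)
  then show ?thesis by simp
qed

end

lemma multiplicity_Lcm:
  fixes p :: "'a::factorial_semiring_gcd"
  assumes "prime_elem p" and "finite X" and "0 \<notin> X"
  shows "multiplicity p (Lcm X) = Max (insert 0 (multiplicity p ` X))"
  using assms(2,3)
proof (induction X rule: finite_induct)
  case empty
  then show ?case
    using assms(1) by (simp add: prime_elem_def)
next
  case (insert x X)
  then have "Lcm X \<noteq> 0" by (simp add: Lcm_0_iff)
  with insert have "multiplicity p (lcm x (Lcm X)) = max (multiplicity p x) (multiplicity p (Lcm X))"
    using multiplicity_lcm[of x "Lcm X" "normalize p"] assms(1) by simp
  with insert show ?case
    by (cases "X = {}") simp_all
qed

lemma multiplicity_dvd_mult_Lcm: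
  fixes g :: "'a::factorial_semiring_gcd"
  assumes "prime_elem g" and "finite K" and "c \<noteq> 0" and "\<forall>k\<in>K. f k \<noteq> 0"
    and "x dvd c * Lcm (f ` K)"
  shows "multiplicity g x \<le> multiplicity g c \<or>
    (\<exists>k\<in>K. multiplicity g x \<le> multiplicity g c + multiplicity g (f k))"
proof -
  have "0 \<notin> f ` K" using assms(4) by auto
  then have "Lcm (f ` K) \<noteq> 0" using assms(2) by (simp add: Lcm_0_iff)
  then have "multiplicity g x \<le> multiplicity g c + multiplicity g (Lcm (f ` K))"
    using dvd_imp_multiplicity_le[OF assms(5), of g] assms(3)
      prime_elem_multiplicity_mult_distrib[OF assms(1,3)] by simp
  moreover have "multiplicity g (Lcm (f ` K)) = Max (insert 0 (multiplicity g ` f ` K))"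
    using multiplicity_Lcm[OF assms(1)] assms(2) \<open>0 \<notin> f ` K\<close> by simp
  moreover have "Max (insert 0 (multiplicity g ` f ` K)) \<in> insert 0 (multiplicity g ` f ` K)"
    using assms(2) by (intro Max_in) auto
  ultimately show ?thesis by auto
qed

lemma sum_nonneg_int_interval:
  assumes "0 \<le> K"
  shows "(\<Sum>j\<in>{0..K}. f j) = (\<Sum>j\<le>nat K. f (int j))"
  using assms by (intro sum.reindex_bij_witness[of _ int nat]) auto

lemma sum_nonpos_int_interval:
  assumes "B \<le> 0"
  shows "(\<Sum>j\<in>{B..0}. f j) = (\<Sum>j\<le>nat (- B). f (- int j))"
  using assms by (intro sum.reindex_bij_witness[of _ "\<lambda>j. - int j" "\<lambda>j. nat (- j)"]) auto

lemma recurrence_bound_up: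
  fixes e M :: "int \<Rightarrow> nat"
  assumes rec: "\<And>k. e k \<le> M k \<or> (\<exists>i>0. e k \<le> M k + e (k + i))"
    and supp: "\<And>k. 0 < e k \<Longrightarrow> k \<le> K"
  shows "e k \<le> (\<Sum>j\<in>{k..K}. M j)"
proof (induction "nat (K - k)" arbitrary: k rule: less_induct)
  case less
  show ?case
  proof (cases "e k = 0")
    case False
    then have "{k..K} = insert k {k + 1..K}" using supp by fastforce
    then have split: "(\<Sum>j\<in>{k..K}. M j) = M k + (\<Sum>j\<in>{k + 1..K}. M j)" by simp
    from rec[of k] show ?thesis
    proof
      assume "\<exists>i>0. e k \<le> M k + e (k + i)"
      then obtain i where "i > 0" and i: "e k \<le> M k + e (k + i)" by blast
      show ?thesis
      proof (cases "e (k + i) = 0")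
        case False
        then have "nat (K - (k + i)) < nat (K - k)" using supp[of "k + i"] \<open>i > 0\<close> by simp
        then have "e (k + i) \<le> (\<Sum>j\<in>{k + i..K}. M j)" by (rule less)
        also have "\<dots> \<le> (\<Sum>j\<in>{k + 1..K}. M j)" using \<open>i > 0\<close> by (intro sum_mono2) auto
        finally show ?thesis using i split by simp
      qed (use i split in simp)
    qed (use split in simp)
  qed simp
qed

lemma recurrence_bound_down:
  fixes e M :: "int \<Rightarrow> nat"
  assumes rec: "\<And>k. e k \<le> M k \<or> (\<exists>i>0. e k \<le> M k + e (k - i))"
    and supp: "\<And>k. 0 < e k \<Longrightarrow> B \<le> k"
  shows "e k \<le> (\<Sum>j\<in>{B..k}. M j)"
proof -
  have "e (- (- k)) \<le> (\<Sum>j\<in>{- k..- B}. M (- j))"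
  proof (rule recurrence_bound_up[of "\<lambda>k. e (- k)"])
    show "e (- k) \<le> M (- k) \<or> (\<exists>i>0. e (- k) \<le> M (- k) + e (- (k + i)))" for k
      using rec[of "- k"] by (simp add: minus_diff_commute)
  next
    show "k \<le> - B" if "0 < e (- k)" for k
      using supp[OF that] by simp
  qed
  also have "(\<Sum>j\<in>{- k..- B}. M (- j)) = (\<Sum>j\<in>{B..k}. M j)"
    by (rule sum.reindex_bij_witness[of _ uminus uminus]) auto
  finally show ?thesis by simp
qed

context poly_difference_field
begin

lemma multiplicity_recurrence_leading:
  fixes l :: nat
  assumes "m \<noteq> 0" and "d \<noteq> 0" and q: "\<And>k. prime_elem (shift k q)"
    and lead: "shift l d dvd m * Lcm ((\<lambda>k. shift k d) ` {0..<int l})"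
  shows "multiplicity (shift k q) d \<le> multiplicity (shift k q) (shift (- int l) m) \<or>
    (\<exists>i>0. multiplicity (shift k q) d
      \<le> multiplicity (shift k q) (shift (- int l) m) + multiplicity (shift (k + i) q) d)"
proof -
  have "multiplicity (shift (k + int l) q) (shift l d) \<le> multiplicity (shift (k + int l) q) m \<or>
    (\<exists>j\<in>{0..<int l}. multiplicity (shift (k + int l) q) (shift l d)
      \<le> multiplicity (shift (k + int l) q) m + multiplicity (shift (k + int l) q) (shift j d))"
    using \<open>m \<noteq> 0\<close> \<open>d \<noteq> 0\<close> by (intro multiplicity_dvd_mult_Lcm[OF q _ _ _ lead]) simp_all
  then show ?thesis
  proof
    assume "\<exists>j\<in>{0..<int l}. multiplicity (shift (k + int l) q) (shift l d)
      \<le> multiplicity (shift (k + int l) q) m + multiplicity (shift (k + int l) q) (shift j d)"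
    then obtain j where "j < int l" and "multiplicity (shift (k + int l) q) (shift l d)
      \<le> multiplicity (shift (k + int l) q) m + multiplicity (shift (k + int l) q) (shift j d)"
      by auto
    then show ?thesis
      by (intro disjI2 exI[of _ "int l - j"]) (simp add: multiplicity_shift algebra_simps)
  qed (simp add: multiplicity_shift)
qed

lemma multiplicity_recurrence_trailing:
  fixes lt :: nat
  assumes "p \<noteq> 0" and "d \<noteq> 0" and q: "\<And>k. prime_elem (shift k q)"
    and trail: "d dvd p * Lcm ((\<lambda>k. shift k d) ` {1..int lt})"
  shows "multiplicity (shift k q) d \<le> multiplicity (shift k q) p \<or>
    (\<exists>i>0. multiplicity (shift k q) d \<le> multiplicity (shift k q) p + multiplicity (shift (k - i) q) d)"
proof -
  have "multiplicity (shift k q) d \<le> multiplicity (shift k q) p \<or>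
    (\<exists>j\<in>{1..int lt}. multiplicity (shift k q) d
      \<le> multiplicity (shift k q) p + multiplicity (shift k q) (shift j d))"
    using \<open>p \<noteq> 0\<close> \<open>d \<noteq> 0\<close> by (intro multiplicity_dvd_mult_Lcm[OF q _ _ _ trail]) simp_all
  then show ?thesis
    by (auto simp: multiplicity_shift)
qed

end

context PiSigma_extension
begin

lemma shift_factor_in_spread:
  assumes "prime_elem g" and "per_free isSigma g" and "x \<noteq> 0"
    and "g dvd shift k x" and "shift (- int j) g dvd y"
  shows "j \<in> spread s tt (shift k (ap isSigma x)) (ap isSigma y)"
proof -
  have "g dvd shift k (ap isSigma x)"
    using assms by (intro dvd_shift_ap)
  moreover have "shift (- int j) g dvd shift 0 (ap isSigma y)"
    using assms by (intro dvd_shift_ap prime_elem_shift) simp_all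
  then have "g dvd shift (int j) (ap isSigma y)"
    by (simp add: dvd_shift_iff)
  then have "g dvd (sig_poly s tt ^^ j) (ap isSigma y)"
    by (simp only: ipow_int)
  ultimately have "degree g \<le> degree (gcd (shift k (ap isSigma x)) ((sig_poly s tt ^^ j) (ap isSigma y)))"
    using \<open>x \<noteq> 0\<close> by (intro dvd_imp_degree_le) simp_all
  then show ?thesis
    using degree_ge_1_if_prime_elem[OF assms(1)] by (simp add: spread_def)
qed

lemma multiplicity_chain_ends:
  fixes l lt :: nat
  assumes "m \<noteq> 0" and "p \<noteq> 0" and "d \<noteq> 0"
    and lead: "shift l d dvd m * Lcm ((\<lambda>k. shift k d) ` {0..<int l})"
    and trail: "d dvd p * Lcm ((\<lambda>k. shift k d) ` {1..int lt})"
    and q: "prime_elem q" and "per_free isSigma q" and "q dvd d"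
  obtains K B where "B \<le> 0" and "0 \<le> K"
    and "shift K q dvd shift (- int l) m" and "shift B q dvd p"
    and "multiplicity q d \<le> (\<Sum>j\<in>{0..K}. multiplicity (shift j q) (shift (- int l) m))"
    and "multiplicity q d \<le> (\<Sum>j\<in>{B..0}. multiplicity (shift j q) p)"
proof -
  define e where "e k = multiplicity (shift k q) d" for k
  note up = multiplicity_recurrence_leading[OF \<open>m \<noteq> 0\<close> \<open>d \<noteq> 0\<close> prime_elem_shift[OF q] lead]
  note down = multiplicity_recurrence_trailing[OF \<open>p \<noteq> 0\<close> \<open>d \<noteq> 0\<close> prime_elem_shift[OF q] trail]
  define Z where "Z = {k. 0 < e k}"
  have "Z = {k. shift k q dvd d}"
    using prime_elem_shift[OF q] \<open>d \<noteq> 0\<close> by (simp add: Z_def e_def prime_multiplicity_gt_zero_iff)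
  then have "finite Z" and "0 \<in> Z"
    using finite_shifts_dvd[OF q \<open>per_free isSigma q\<close> \<open>d \<noteq> 0\<close>] \<open>q dvd d\<close> by simp_all
  define K B where "K = Max Z" and "B = Min Z"
  have "0 < e K" and "0 < e B"
    using \<open>finite Z\<close> \<open>0 \<in> Z\<close> Max_in[of Z] Min_in[of Z] by (auto simp: K_def B_def Z_def)
  have below_K: "k \<le> K" and above_B: "B \<le> k" if "0 < e k" for k
    using that \<open>finite Z\<close> by (simp_all add: K_def B_def Z_def)
  have "0 \<le> K" and "B \<le> 0"
    using \<open>0 \<in> Z\<close> by (simp_all add: Z_def below_K above_B)
  text \<open>At the ends of the support of e the recurrences can only hold through m, resp. p.\<close>
  have beyond_K: "e (K + i) = 0" and beyond_B: "e (B - i) = 0" if "0 < i" for i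
    using below_K[of "K + i"] above_B[of "B - i"] that by fastforce+
  have "0 < multiplicity (shift K q) (shift (- int l) m)"
    using up[of K] \<open>0 < e K\<close> beyond_K by (auto simp: e_def)
  moreover have "0 < multiplicity (shift B q) p"
    using down[of B] \<open>0 < e B\<close> beyond_B by (auto simp: e_def)
  ultimately have "shift K q dvd shift (- int l) m" and "shift B q dvd p"
    using prime_elem_shift[OF q] \<open>m \<noteq> 0\<close> \<open>p \<noteq> 0\<close> by (simp_all add: prime_multiplicity_gt_zero_iff)
  moreover have "e 0 \<le> (\<Sum>j\<in>{0..K}. multiplicity (shift j q) (shift (- int l) m))"
    using up by (intro recurrence_bound_up below_K) (simp add: e_def)
  moreover have "e 0 \<le> (\<Sum>j\<in>{B..0}. multiplicity (shift j q) p)"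
    using down by (intro recurrence_bound_down above_B) (simp add: e_def)
  ultimately show ?thesis
    using that \<open>B \<le> 0\<close> \<open>0 \<le> K\<close> by (simp add: e_def)
qed

lemma multiplicity_ap_denom_bound:
  fixes l lt :: nat
  assumes "m \<noteq> 0" and "p \<noteq> 0" and "d \<noteq> 0"
    and lead: "shift l d dvd m * Lcm ((\<lambda>k. shift k d) ` {0..<int l})"
    and trail: "d dvd p * Lcm ((\<lambda>k. shift k d) ` {1..int lt})"
    and q: "prime_elem q" and "q dvd ap isSigma d"
  obtains D where "D \<in> spread s tt (shift (- int l) (ap isSigma m)) (ap isSigma p)"
    and "multiplicity q (ap isSigma d) \<le> (\<Sum>j\<le>D. multiplicity q (shift (- int l - int j) m))"
    and "multiplicity q (ap isSigma d) \<le> (\<Sum>j\<le>D. multiplicity q (shift (int j) p))"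
proof -
  have "per_free isSigma q"
    by (rule per_free_if_dvd_ap[OF q \<open>d \<noteq> 0\<close> \<open>q dvd ap isSigma d\<close>])
  moreover have "q dvd d"
    using \<open>q dvd ap isSigma d\<close> ap_dvd by (rule dvd_trans)
  ultimately obtain K B where "B \<le> 0" and "0 \<le> K"
    and "shift K q dvd shift (- int l) m" and "shift B q dvd p"
    and up: "multiplicity q d \<le> (\<Sum>j\<in>{0..K}. multiplicity (shift j q) (shift (- int l) m))"
    and down: "multiplicity q d \<le> (\<Sum>j\<in>{B..0}. multiplicity (shift j q) p)"
    using multiplicity_chain_ends[OF assms(1-5) q] by blast
  have "shift (- int (nat (K - B))) (shift K q) = shift B q"
    using \<open>B \<le> 0\<close> \<open>0 \<le> K\<close> by simp
  with \<open>shift B q dvd p\<close> have "shift (- int (nat (K - B))) (shift K q) dvd p"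
    by simp
  then have "nat (K - B) \<in> spread s tt (shift (- int l) (ap isSigma m)) (ap isSigma p)"
    using \<open>per_free isSigma q\<close>
    by (intro shift_factor_in_spread[OF prime_elem_shift[OF q] _ \<open>m \<noteq> 0\<close> \<open>shift K q dvd shift (- int l) m\<close>])
      simp_all
  moreover have "(\<Sum>j\<in>{0..K}. multiplicity (shift j q) (shift (- int l) m))
      \<le> (\<Sum>j\<le>nat (K - B). multiplicity q (shift (- int l - int j) m))"
    using \<open>0 \<le> K\<close> \<open>B \<le> 0\<close>
    by (simp add: sum_nonneg_int_interval multiplicity_shift multiplicity_shift_right algebra_simps,
        intro sum_mono2) auto
  moreover have "(\<Sum>j\<in>{B..0}. multiplicity (shift j q) p) \<le> (\<Sum>j\<le>nat (K - B). multiplicity q (shift (int j) p))"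
    using \<open>0 \<le> K\<close> \<open>B \<le> 0\<close>
    by (simp add: sum_nonpos_int_interval multiplicity_shift_right, intro sum_mono2) auto
  moreover have "multiplicity q (ap isSigma d) \<le> multiplicity q d"
    using dvd_imp_multiplicity_le[OF ap_dvd \<open>d \<noteq> 0\<close>] .
  ultimately show ?thesis
    using that up down by (meson le_trans)
qed

lemma ap_denom_dvd_shift_prods:
  fixes l lt :: nat
  assumes "m \<noteq> 0" and "p \<noteq> 0" and "d \<noteq> 0"
    and lead: "shift l d dvd m * Lcm ((\<lambda>k. shift k d) ` {0..<int l})"
    and trail: "d dvd p * Lcm ((\<lambda>k. shift k d) ` {1..int lt})"
  defines "J \<equiv> {j::nat. ereal (real j) \<le> disp s tt (shift (- int l) (ap isSigma m)) (ap isSigma p)}"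
  shows "ap isSigma d dvd (\<Prod>j\<in>J. shift (- int l - int j) m)"
    and "ap isSigma d dvd (\<Prod>j\<in>J. shift (int j) p)"
proof -
  define S where "S = spread s tt (shift (- int l) (ap isSigma m)) (ap isSigma p)"
  have "finite S"
    using finite_spread_shift_ap \<open>m \<noteq> 0\<close> \<open>p \<noteq> 0\<close> by (simp add: S_def)
  have "multiplicity q (ap isSigma d) \<le> multiplicity q (\<Prod>j\<in>J. shift (- int l - int j) m) \<and>
      multiplicity q (ap isSigma d) \<le> multiplicity q (\<Prod>j\<in>J. shift (int j) p)" if "prime q" for q
  proof (cases "q dvd ap isSigma d")
    case True
    then obtain D where "D \<in> S"
      and bound_m: "multiplicity q (ap isSigma d) \<le> (\<Sum>j\<le>D. multiplicity q (shift (- int l - int j) m))"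
      and bound_p: "multiplicity q (ap isSigma d) \<le> (\<Sum>j\<le>D. multiplicity q (shift (int j) p))"
      using multiplicity_ap_denom_bound[OF assms(1-5)] \<open>prime q\<close> unfolding S_def by blast
    then have J: "J = {..Max S}" and "D \<le> Max S"
      using \<open>finite S\<close> by (auto simp: J_def disp_def S_def[symmetric])
    have "(\<Sum>j\<le>D. multiplicity q (f j)) \<le> multiplicity q (\<Prod>j\<in>J. f j)"
      if "\<And>j. f j \<noteq> 0" for f
    proof -
      have "(\<Sum>j\<le>D. multiplicity q (f j)) \<le> (\<Sum>j\<in>J. multiplicity q (f j))"
        using \<open>D \<le> Max S\<close> by (auto simp: J intro: sum_mono2)
      also have "\<dots> = multiplicity q (\<Prod>j\<in>J. f j)"
        using that \<open>prime q\<close>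
        by (intro prime_elem_multiplicity_prod_distrib[symmetric]) (auto simp: J image_iff)
      finally show ?thesis .
    qed
    then show ?thesis
      using bound_m bound_p \<open>m \<noteq> 0\<close> \<open>p \<noteq> 0\<close> by (meson le_trans shift_eq_0_iff)
  qed (simp add: not_dvd_imp_multiplicity_0)
  then show "ap isSigma d dvd (\<Prod>j\<in>J. shift (- int l - int j) m)"
    and "ap isSigma d dvd (\<Prod>j\<in>J. shift (int j) p)"
    using \<open>d \<noteq> 0\<close> by (auto intro: multiplicity_le_imp_dvd)
qed

end

theorem lemma4:
  fixes s :: "'a::{field_char_0,field_gcd} \<Rightarrow> 'a" and tt :: "'a poly" and isSigma :: bool
    and l :: nat and A :: "nat \<Rightarrow> ('a poly)^'n::finite^'n" and b :: "('a poly)^'n"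
    and P :: "('a,'n) opmat" and lt :: nat and At :: "nat \<Rightarrow> ('a poly)^'n^'n"
    and bt :: "('a poly)^'n" and m p d :: "'a poly" and z :: "('a poly)^'n"
  assumes ext: "PiSigma_ext s tt isSigma"
    and detA: "det (A l) \<noteq> 0"
    and unimod: "unimodular s tt P"
    and PA: "op_mult s tt P (poly_op l A) = poly_op lt At"
    and Pb: "op_apply s tt P (fvec b) = fvec bt"
    and detAt: "det (At 0) \<noteq> 0"
    and m: "common_denom m (matrix_inv (fmat (A l)))"
    and p: "common_denom p (matrix_inv (fmat (At 0)))"
    and d: "d \<noteq> 0"
    and red: "\<forall>c. c dvd d \<and> (\<forall>i. c dvd z$i) \<longrightarrow> is_unit c"
    and sol: "op_apply s tt (poly_op l A) ((\<chi> i. to_fract (z$i) / to_fract d)) = fvec b"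
  shows "let D = disp s tt (ipow (sig_poly s tt) (- int l) (ap isSigma m)) (ap isSigma p);
             J = {j::nat. ereal (real j) \<le> D}
         in ap isSigma d dvd
              gcd (\<Prod>j\<in>J. ipow (sig_poly s tt) (- int l - int j) m)
                  (\<Prod>j\<in>J. ipow (sig_poly s tt) (int j) p)"
proof -
  interpret PiSigma_extension s tt isSigma
    using ext by unfold_locales
  have "m \<noteq> 0" and "p \<noteq> 0"
    using m p by (simp_all add: common_denom_def)
  have "reduced_repr d z"
    using red by (simp add: reduced_repr_def)
  note lead = shift_denom_dvd_leading[OF detA m d \<open>reduced_repr d z\<close> sol]
  note trail = denom_dvd_trailing[OF unimod PA Pb detAt p d \<open>reduced_repr d z\<close> sol]
  show ?thesis
    using ap_denom_dvd_shift_prods[OF \<open>m \<noteq> 0\<close> \<open>p \<noteq> 0\<close> d lead trail]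
    by (simp add: Let_def gcd_greatest)
qed

end
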